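(* Consider the online convex optimization setting with stochastic gradients described in the context, and run Algorithm 1 with $N=\frac{\beta D}{\sigma}\sqrt{T}$ (assumed to be a positive integer), so that it makes $N$ stochastic gradient oracle calls per round and no projections. Suppose each of the $N$ online linear optimizers is instantiated with an online linear optimizer (e.g. Follow the Perturbed Leader) whose expected regret on linear losses $x\mapsto g^\top x$ with $\|g\|\le\sigma$ over $\mathcal K$ is $O(\sigma D\sqrt T)$. Then for any sequence of convex losses $\ell_1,\dots,\ell_T\in\mathcal L$ and any $x^*\in\mathcal K$, \[ \mathbb{E}\Big[\sum_{t=1}^T \ell_t(x_t)-\sum_{t=1}^T \ell_t(x^* )\Big]\le O\big(\sigma D\sqrt T\big), \] where the expectation is over the oracle's randomness and the internal randomness of the online linear optimizers, and $O(\cdot)$ hides absolute constants.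
   Context: Let $\mathcal K\subset\mathbb R^d$ be a compact convex set of diameter $D$ (i.e. $\|x-x'\|\le D$ for all $x,x'\in\mathcal K$). A class $\mathcal L$ of convex functions on $\mathcal K$ is given; the losses $\ell_1,\dots,\ell_T\in\mathcal L$ are fixed in advance (oblivious adversary). Assumptions: (A1) every $\ell\in\mathcal L$ is $\beta$-smooth: $\|\nabla\ell(x)-\nabla\ell(x')\|\le\beta\|x-x'\|$ for all $x,x'\in\mathcal K$; (A2) a stochastic gradient oracle $\mathcal O$, queried at round $t$ at a point $x\in\mathcal K$, returns a random vector $\mathbf g$ (using fresh randomness) with $\mathbb E[\mathbf g]=\nabla\ell_t(x)$ and $\|\mathbf g\|^2\le\sigma^2$. An online linear optimizer (OLO) over $\mathcal K$ is an online algorithm which at each round outputs a point of $\mathcal K$ based on the linear losses $\ell'_s(x)=g_s^\top x$ ($\|g_s\|\le\sigma$) revealed in previous rounds; its regret is $\sum_{t}\ell'_t(x_t)-\min_{x\in\mathcal K}\sum_t\ell'_t(x)$. Algorithm 1: maintain $N$ OLOs $\mathcal A_1,\dots,\mathcal A_N$ and step sizes $\eta_i=\frac{2}{i+1}$. At each round $t=1,\dots,T$: set $\mathbf x_t^0=\mathbf 0$; for $i=1,\dots,N$: let $x_{t,i}\in\mathcal K$ be the output of $\mathcal A_i$ at round $t$ (having seen $\ell^i_1,\dots,\ell^i_{t-1}$), set $\mathbf x_t^i=(1-\eta_i)\mathbf x_t^{i-1}+\eta_i x_{t,i}$, query the oracle at $\mathbf x_t^{i-1}$ to get $\mathbf g_{t,i}$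 with $\mathbb E[\mathbf g_{t,i}]=\nabla\ell_t(\mathbf x_t^{i-1})$, and pass the linear loss $\ell_t^i(x)=\mathbf g_{t,i}^\top x$ to $\mathcal A_i$. The prediction is $x_t=\mathbf x_t^N$, and the loss $\ell_t(x_t)$ is incurred. *)

theory Defs
  imports "HOL-Probability.Probability"
begin

text \<open>Algorithm 1. OLOs are indexed 0..N-1 (paper index i+1), so the step size of
 OLO i is eta = 2/(i+2). Rounds are indexed 0..T-1.
 An OLO A i is a function of its internal random seed r, of the sequence gs of linear loss
 vectors fed to it, and of the round t; causality (output at round t depends only on gs s for
 s < t) is an explicit hypothesis of the theorem.
 The oracle at round s, queried at x with fresh seed w, returns orc s x w.
 fw_iter i A orc rs ws t is the point x_t^i; the seed of OLO i is rs i, the oracle seed of the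
 query made at round s by OLO i is ws (s,i).\<close>

primrec fw_iter ::
  "nat \<Rightarrow> (nat \<Rightarrow> 'r \<Rightarrow> (nat \<Rightarrow> 'a) \<Rightarrow> nat \<Rightarrow> 'a) \<Rightarrow> (nat \<Rightarrow> 'a \<Rightarrow> 'w \<Rightarrow> 'a)
   \<Rightarrow> (nat \<Rightarrow> 'r) \<Rightarrow> (nat \<times> nat \<Rightarrow> 'w) \<Rightarrow> nat \<Rightarrow> 'a::real_vector" where
  "fw_iter 0 A orc rs ws = (\<lambda>t. 0)"
| "fw_iter (Suc i) A orc rs ws =
     (\<lambda>t. (1 - 2 / (real i + 2)) *\<^sub>R fw_iter i A orc rs ws t
          + (2 / (real i + 2)) *\<^sub>R
              A i (rs i) (\<lambda>s. orc s (fw_iter i A orc rs ws s) (ws (s, i))) t)"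

definition seed_space :: "nat \<Rightarrow> nat \<Rightarrow> (nat \<Rightarrow> 'r measure) \<Rightarrow> 'w measure
    \<Rightarrow> ((nat \<Rightarrow> 'r) \<times> (nat \<times> nat \<Rightarrow> 'w)) measure" where
  "seed_space N T R W = (PiM {..<N} R) \<Otimes>\<^sub>M (PiM ({..<T} \<times> {..<N}) (\<lambda>_. W))"

end

(* Fix a round t, write f = loss t, x^i for the i-th iterate, v_i for the point of the i-th online
   linear optimizer and eta_i = 2/(i+2). Smoothness and convexity of f give, for any comparator u,
     f(x^(i+1)) - f(u) <= (1 - eta_i) (f(x^i) - f(u)) + eta_i grad f(x^i).(v_i - u) + beta/2 eta_i^2 D^2.
   Summed over the rounds, the middle term has expectation at most the regret bound C sigma D sqrt T of
   optimizer i: the stochastic gradients fed to it do not depend on its own seed, and replacing them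
   by the true gradients costs nothing in expectation, as v_i is fixed before the fresh oracle seed is
   drawn. The recursion h(i+1) <= (1 - eta_i) h(i) + eta_i r + c/2 eta_i^2 yields h(N) <= r + 2c/(N+1),
   and for c = beta D^2 T and N = beta D sqrt T / sigma the last term is at most 2 sigma D sqrt T. *)

theory Submission
  imports Defs
begin

lemma abs_remainder_le_of_lipschitz_deriv:
  fixes f f' :: "real \<Rightarrow> real"
  assumes deriv: "\<And>s. s \<in> {0..1} \<Longrightarrow> (f has_real_derivative f' s) (at s within {0..1})"
    and lip: "\<And>s. s \<in> {0..1} \<Longrightarrow> \<bar>f' s - f' 0\<bar> \<le> L * s"
  shows "\<bar>f 1 - f 0 - f' 0\<bar> \<le> L / 2"
proof -
  \<comment> \<open>Mean value theorem for the two functions below, whose derivatives have constant sign.\<close>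
  define p where "p s = f s - s * f' 0 - L * s\<^sup>2 / 2" for s
  define q where "q s = f s - s * f' 0 + L * s\<^sup>2 / 2" for s
  have dp: "(p has_derivative (*) (f' s - f' 0 - L * s)) (at s within {0..1})"
    if "s \<in> {0..1}" for s
  proof -
    have "(p has_real_derivative (f' s - f' 0 - L * (2 * s ^ 1) / 2)) (at s within {0..1})"
      unfolding p_def using deriv[OF that] by (auto intro!: derivative_eq_intros)
    then show ?thesis by (simp add: has_field_derivative_def mult_commute_abs)
  qed
  have dq: "(q has_derivative (*) (f' s - f' 0 + L * s)) (at s within {0..1})"
    if "s \<in> {0..1}" for s
  proof -
    have "(q has_real_derivative (f' s - f' 0 + L * (2 * s ^ 1) / 2)) (at s within {0..1})"
      unfolding q_def using deriv[OF that] by (auto intro!: derivative_eq_intros)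
    then show ?thesis by (simp add: has_field_derivative_def mult_commute_abs)
  qed
  obtain s1 where s1: "s1 \<in> {0..1}" "p 1 - p 0 = (f' s1 - f' 0 - L * s1) * (1 - 0)"
    using mvt_very_simple[of 0 1 p "\<lambda>s. (*) (f' s - f' 0 - L * s)"] dp by auto
  obtain s2 where s2: "s2 \<in> {0..1}" "q 1 - q 0 = (f' s2 - f' 0 + L * s2) * (1 - 0)"
    using mvt_very_simple[of 0 1 q "\<lambda>s. (*) (f' s - f' 0 + L * s)"] dq by auto
  have "p 1 \<le> p 0" using s1 lip[OF s1(1)] by simp
  moreover have "q 0 \<le> q 1" using s2 lip[OF s2(1)] by simp
  ultimately show ?thesis unfolding p_def q_def abs_le_iff by simp
qed

lemma convex_segment_subset:
  assumes "convex K" "x \<in> K" "y \<in> K"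
  shows "(\<lambda>s. x + s *\<^sub>R (y - x)) ` {0..1} \<subseteq> K"
proof clarify
  fix s :: real assume "s \<in> {0..1}"
  then have "(1 - s) *\<^sub>R x + s *\<^sub>R y \<in> K"
    using convexD[OF assms] by simp
  then show "x + s *\<^sub>R (y - x) \<in> K" by (simp add: algebra_simps)
qed

lemma lipschitz_gradient_remainder_le:
  fixes f :: "'a::real_inner \<Rightarrow> real"
  assumes K: "convex K" and x: "x \<in> K" and y: "y \<in> K"
    and deriv: "\<And>z. z \<in> K \<Longrightarrow> (f has_derivative (\<lambda>h. g z \<bullet> h)) (at z within K)"
    and lip: "\<And>z w. z \<in> K \<Longrightarrow> w \<in> K \<Longrightarrow> norm (g z - g w) \<le> \<beta> * norm (z - w)"
  shows "\<bar>f y - f x - g x \<bullet> (y - x)\<bar> \<le> \<beta> / 2 * (norm (y - x))\<^sup>2"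
proof -
  define d where "d = y - x"
  define \<phi> where "\<phi> s = f (x + s *\<^sub>R d)" for s
  define \<phi>' where "\<phi>' s = g (x + s *\<^sub>R d) \<bullet> d" for s
  have segment: "(\<lambda>s. x + s *\<^sub>R d) ` {0..1} \<subseteq> K"
    unfolding d_def by (rule convex_segment_subset[OF K x y])
  have "(\<phi> has_real_derivative \<phi>' s) (at s within {0..1})" if s: "s \<in> {0..1}" for s
  proof -
    have "((\<lambda>s. x + s *\<^sub>R d) has_derivative (\<lambda>h. h *\<^sub>R d)) (at s within {0..1})"
      by (auto intro!: derivative_eq_intros)
    from has_derivative_in_compose2[OF deriv segment s this]
    show ?thesis
      by (simp add: \<phi>_def[abs_def] \<phi>'_def has_field_derivative_def mult_commute_abs)
  qed
  moreover have "\<bar>\<phi>' s - \<phi>' 0\<bar> \<le> (\<beta> * (norm d)\<^sup>2) * s" if s: "s \<in> {0..1}" for s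
  proof -
    have "\<bar>\<phi>' s - \<phi>' 0\<bar> = \<bar>(g (x + s *\<^sub>R d) - g x) \<bullet> d\<bar>"
      by (simp add: \<phi>'_def inner_diff_left)
    also have "\<dots> \<le> norm (g (x + s *\<^sub>R d) - g x) * norm d"
      by (rule Cauchy_Schwarz_ineq2)
    also have "\<dots> \<le> \<beta> * norm (s *\<^sub>R d) * norm d"
    proof -
      have "x + s *\<^sub>R d \<in> K" using segment s by blast
      from lip[OF this x] show ?thesis by (intro mult_right_mono) auto
    qed
    also have "\<dots> = (\<beta> * (norm d)\<^sup>2) * s"
      using s by (simp add: power2_eq_square)
    finally show ?thesis .
  qed
  ultimately have "\<bar>\<phi> 1 - \<phi> 0 - \<phi>' 0\<bar> \<le> (\<beta> * (norm d)\<^sup>2) / 2"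
    by (rule abs_remainder_le_of_lipschitz_deriv)
  then show ?thesis by (simp add: \<phi>_def \<phi>'_def d_def)
qed

lemma convex_on_linearization_le:
  fixes f :: "'a::real_normed_vector \<Rightarrow> real"
  assumes f: "convex_on K f" and x: "x \<in> K" and y: "y \<in> K"
    and deriv: "(f has_derivative f') (at x within K)"
  shows "f x + f' (y - x) \<le> f y"
proof -
  define \<phi> where "\<phi> s = f (x + s *\<^sub>R (y - x))" for s
  have "((\<lambda>s. x + s *\<^sub>R (y - x)) has_derivative (\<lambda>s. s *\<^sub>R (y - x))) (at 0 within {0..1})"
    by (auto intro!: derivative_eq_intros)
  then have "(\<phi> has_derivative (\<lambda>s. f' (s *\<^sub>R (y - x)))) (at 0 within {0..1})"
    unfolding \<phi>_def[abs_def]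
    by (rule has_derivative_in_compose)
      (rule has_derivative_subset[OF _ convex_segment_subset[OF convex_on_imp_convex[OF f] x y]],
       simp add: deriv)
  then have "(\<phi> has_real_derivative f' (y - x)) (at 0 within {0..1})"
    by (simp add: linear_cmul[OF has_derivative_linear[OF deriv]] has_field_derivative_def
        mult_commute_abs)
  then have "((\<lambda>s. (\<phi> s - \<phi> 0) / s) \<longlongrightarrow> f' (y - x)) (at_right 0)"
    by (simp add: has_field_derivative_iff at_within_Icc_at_right)
  moreover have "\<forall>\<^sub>F s in at_right 0. (\<phi> s - \<phi> 0) / s \<le> \<phi> 1 - \<phi> 0"
    using eventually_at_right_real[OF zero_less_one]
  proof eventually_elim
    case (elim s)
    have "\<phi> s \<le> (1 - s) * \<phi> 0 + s * \<phi> 1"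
      using convex_onD[OF f, of s x y] elim x y by (simp add: \<phi>_def algebra_simps)
    then show ?case using elim by (simp add: field_simps)
  qed
  ultimately have "f' (y - x) \<le> \<phi> 1 - \<phi> 0"
    by (rule tendsto_upperbound) simp
  then show ?thesis by (simp add: \<phi>_def)
qed

lemma frank_wolfe_step_le:
  fixes f :: "'a::real_inner \<Rightarrow> real"
  assumes f: "convex_on K f"
    and deriv: "\<And>z. z \<in> K \<Longrightarrow> (f has_derivative (\<lambda>h. g z \<bullet> h)) (at z within K)"
    and lip: "\<And>z w. z \<in> K \<Longrightarrow> w \<in> K \<Longrightarrow> norm (g z - g w) \<le> \<beta> * norm (z - w)"
    and e: "0 \<le> e" "e \<le> 1" and y: "y \<in> K" and v: "v \<in> K" and u: "u \<in> K"
  shows "f ((1 - e) *\<^sub>R y + e *\<^sub>R v) - f u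
           \<le> (1 - e) * (f y - f u) + e * (g y \<bullet> (v - u)) + \<beta> / 2 * e\<^sup>2 * (norm (v - y))\<^sup>2"
proof -
  define z where "z = (1 - e) *\<^sub>R y + e *\<^sub>R v"
  have K: "convex K" by (rule convex_on_imp_convex[OF f])
  have z: "z \<in> K" using convexD[OF K y v] e by (simp add: z_def)
  have zy: "z - y = e *\<^sub>R (v - y)" by (simp add: z_def algebra_simps)
  have remainder: "\<bar>f z - f y - g y \<bullet> (z - y)\<bar> \<le> \<beta> / 2 * (norm (z - y))\<^sup>2"
    by (rule lipschitz_gradient_remainder_le[OF K y z deriv lip])
  have norm_zy: "(norm (z - y))\<^sup>2 = e\<^sup>2 * (norm (v - y))\<^sup>2"
    using e by (simp add: zy power_mult_distrib)
  have smooth: "f z - f y - g y \<bullet> (z - y) \<le> \<beta> / 2 * e\<^sup>2 * (norm (v - y))\<^sup>2"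
    using remainder unfolding norm_zy abs_le_iff mult.assoc by linarith
  have tangent: "f y + g y \<bullet> (u - y) \<le> f u"
    using convex_on_linearization_le[OF f y u deriv[OF y]] .
  have "f z - f u \<le> f y - f u + g y \<bullet> (z - y) + \<beta> / 2 * e\<^sup>2 * (norm (v - y))\<^sup>2"
    using smooth by simp
  also have "\<dots> = f y - f u + e * (g y \<bullet> (v - u)) + e * (g y \<bullet> (u - y))
                    + \<beta> / 2 * e\<^sup>2 * (norm (v - y))\<^sup>2"
    by (simp add: zy inner_diff_right algebra_simps)
  also have "\<dots> \<le> f y - f u + e * (g y \<bullet> (v - u)) + e * (f u - f y)
                    + \<beta> / 2 * e\<^sup>2 * (norm (v - y))\<^sup>2"
    using tangent e by (simp add: mult_left_mono)
  also have "\<dots> = (1 - e) * (f y - f u) + e * (g y \<bullet> (v - u)) + \<beta> / 2 * e\<^sup>2 * (norm (v - y))\<^sup>2"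
    by (simp add: algebra_simps)
  finally show ?thesis unfolding z_def .
qed

lemma frank_wolfe_recursion_bound:
  fixes h :: "nat \<Rightarrow> real"
  assumes c: "c \<ge> 0"
    and step: "\<And>i. i < n \<Longrightarrow>
      h (Suc i) \<le> (1 - 2 / (real i + 2)) * h i + 2 / (real i + 2) * r + c / 2 * (2 / (real i + 2))\<^sup>2"
  shows "i < n \<Longrightarrow> h (Suc i) \<le> r + 2 * c / (real i + 2)"
proof (induction i)
  case 0
  then show ?case using step[of 0] c by simp
next
  case (Suc i)
  define m where "m = real i + 2"
  have m: "m \<ge> 2" by (simp add: m_def)
  have "h (Suc (Suc i)) \<le> (1 - 2 / (m + 1)) * h (Suc i) + 2 / (m + 1) * r + c / 2 * (2 / (m + 1))\<^sup>2"
    using step[OF Suc.prems] by (simp add: m_def add.commute add.left_commute)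
  also have "\<dots> \<le> (1 - 2 / (m + 1)) * (r + 2 * c / m) + 2 / (m + 1) * r + c / 2 * (2 / (m + 1))\<^sup>2"
    using Suc m c by (intro add_mono mult_left_mono) (auto simp: m_def)
  also have "\<dots> = r + 2 * c / (m + 1) - 2 * c / (m * (m + 1)\<^sup>2)"
  proof -
    have "m \<noteq> 0" "m + 1 \<noteq> 0" using m by auto
    then show ?thesis by (simp add: divide_simps) algebra
  qed
  also have "\<dots> \<le> r + 2 * c / (m + 1)"
    using c m by simp
  finally show ?case by (simp add: m_def add.commute add.left_commute)
qed

lemma smoothness_nonneg_of_step_count:
  fixes \<beta> D \<sigma> :: real
  assumes "\<sigma> > 0" "D \<ge> 0" "N \<ge> 1" "real N = \<beta> * D * sqrt (real T) / \<sigma>"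
  shows "\<beta> \<ge> 0"
proof -
  have "0 < \<beta> * (D * sqrt (real T)) / \<sigma>"
    using assms(3,4) by (simp add: mult.assoc)
  moreover have "D * sqrt (real T) \<ge> 0"
    using assms(2) by simp
  ultimately show ?thesis
    using assms(1) by (simp add: zero_less_divide_iff zero_less_mult_iff)
qed

lemma smoothness_term_le_of_step_count:
  fixes \<beta> D \<sigma> :: real
  assumes "\<sigma> > 0" "D \<ge> 0" "real N = \<beta> * D * sqrt (real T) / \<sigma>"
  shows "\<beta> * D\<^sup>2 * real T / (real N + 1) \<le> \<sigma> * D * sqrt (real T)"
proof -
  have "\<beta> * D\<^sup>2 * real T = (\<beta> * D * sqrt (real T)) * (D * sqrt (real T))"
    by (simp add: power2_eq_square mult_ac)
  also have "\<beta> * D * sqrt (real T) = \<sigma> * real N"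
    using assms(1,3) by simp
  finally have "\<beta> * D\<^sup>2 * real T = real N * (\<sigma> * D * sqrt (real T))"
    by (simp add: mult_ac)
  also have "\<dots> \<le> (real N + 1) * (\<sigma> * D * sqrt (real T))"
    using assms(1,2) by (intro mult_right_mono) auto
  finally show ?thesis
    by (simp add: pos_divide_le_eq mult.commute)
qed

definition bounded_measurable :: "'a measure \<Rightarrow> ('a \<Rightarrow> real) \<Rightarrow> bool" where
  "bounded_measurable M f \<longleftrightarrow> f \<in> borel_measurable M \<and> (\<exists>B. \<forall>x\<in>space M. \<bar>f x\<bar> \<le> B)"

lemma bounded_measurableI:
  "f \<in> borel_measurable M \<Longrightarrow> (\<And>x. x \<in> space M \<Longrightarrow> \<bar>f x\<bar> \<le> B) \<Longrightarrow> bounded_measurable M f"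
  unfolding bounded_measurable_def by blast

lemma (in finite_measure) integrable_bounded_measurable:
  assumes "bounded_measurable M f"
  shows "integrable M f"
proof -
  obtain B where "f \<in> borel_measurable M" "\<forall>x\<in>space M. \<bar>f x\<bar> \<le> B"
    using assms by (auto simp: bounded_measurable_def)
  then show ?thesis by (intro integrable_const_bound[where B=B]) auto
qed

lemma bounded_measurable_add:
  assumes "bounded_measurable M f" "bounded_measurable M g"
  shows "bounded_measurable M (\<lambda>x. f x + g x)"
proof -
  obtain B1 B2 where "\<forall>x\<in>space M. \<bar>f x\<bar> \<le> B1" "\<forall>x\<in>space M. \<bar>g x\<bar> \<le> B2"
    using assms by (auto simp: bounded_measurable_def)
  then show ?thesis
    using assms unfolding bounded_measurable_def
    by (intro conjI borel_measurable_add exI[of _ "B1 + B2"])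
      (auto intro: abs_triangle_ineq[THEN order_trans] add_mono)
qed

lemma bounded_measurable_sum:
  "(\<And>t. t \<in> S \<Longrightarrow> bounded_measurable M (f t)) \<Longrightarrow> bounded_measurable M (\<lambda>x. \<Sum>t\<in>S. f t x)"
proof (induction S rule: infinite_finite_induct)
  case (insert t S)
  then show ?case by (simp add: bounded_measurable_add)
qed (auto intro: bounded_measurableI[of _ _ 0])

lemma bounded_measurable_pair_section1:
  assumes "bounded_measurable (M1 \<Otimes>\<^sub>M M2) f" "y \<in> space M2"
  shows "bounded_measurable M1 (\<lambda>x. f (x, y))"
  using assms by (auto simp: bounded_measurable_def space_pair_measure)

lemma bounded_measurable_pair_section2:
  assumes "bounded_measurable (M1 \<Otimes>\<^sub>M M2) f" "x \<in> space M1"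
  shows "bounded_measurable M2 (\<lambda>y. f (x, y))"
  using assms by (auto simp: bounded_measurable_def space_pair_measure)

lemma bounded_measurable_integrate_snd:
  assumes M2: "prob_space M2" and f: "bounded_measurable (M1 \<Otimes>\<^sub>M M2) f"
  shows "bounded_measurable M1 (\<lambda>x. \<integral>y. f (x, y) \<partial>M2)"
proof -
  interpret prob_space M2 by (rule M2)
  obtain B where f_meas: "f \<in> borel_measurable (M1 \<Otimes>\<^sub>M M2)"
    and B: "\<And>z. z \<in> space (M1 \<Otimes>\<^sub>M M2) \<Longrightarrow> \<bar>f z\<bar> \<le> B"
    using f by (auto simp: bounded_measurable_def)
  show ?thesis
  proof (rule bounded_measurableI[where B=B])
    show "(\<lambda>x. \<integral>y. f (x, y) \<partial>M2) \<in> borel_measurable M1"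
      using f_meas by (intro borel_measurable_lebesgue_integral) simp
    fix x assume x: "x \<in> space M1"
    have "\<bar>\<integral>y. f (x, y) \<partial>M2\<bar> \<le> (\<integral>y. \<bar>f (x, y)\<bar> \<partial>M2)"
      using integral_norm_bound[of M2 "\<lambda>y. f (x, y)"] by simp
    also have "\<dots> \<le> B"
      using integrable_bounded_measurable[OF bounded_measurable_pair_section2[OF f x]] B x
      by (intro integral_le_const integrable_abs AE_I2) (auto simp: space_pair_measure)
    finally show "\<bar>\<integral>y. f (x, y) \<partial>M2\<bar> \<le> B" .
  qed
qed

lemma integral_pair_le_of_integral_fst_le:
  assumes M1: "prob_space M1" and M2: "prob_space M2"
    and f: "bounded_measurable (M1 \<Otimes>\<^sub>M M2) f"
    and c: "\<And>y. y \<in> space M2 \<Longrightarrow> (\<integral>x. f (x, y) \<partial>M1) \<le> c"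
  shows "integral\<^sup>L (M1 \<Otimes>\<^sub>M M2) f \<le> c"
proof -
  interpret pair_prob_space M1 M2
    using M1 M2 by (simp add: pair_prob_space_def pair_sigma_finite_def prob_space_imp_sigma_finite)
  have f_int: "integrable (M1 \<Otimes>\<^sub>M M2) (\<lambda>(x, y). f (x, y))"
    using integrable_bounded_measurable[OF f] by simp
  have "integral\<^sup>L (M1 \<Otimes>\<^sub>M M2) f = (\<integral>y. (\<integral>x. f (x, y) \<partial>M1) \<partial>M2)"
    using integral_snd[OF f_int] by simp
  also have "\<dots> \<le> c"
    using integrable_snd[OF f_int] c by (intro M2.integral_le_const AE_I2) auto
  finally show ?thesis .
qed

lemma integral_pair_le_of_integral_snd_le:
  assumes M1: "prob_space M1" and M2: "prob_space M2"
    and f: "bounded_measurable (M1 \<Otimes>\<^sub>M M2) f"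
    and c: "\<And>x. x \<in> space M1 \<Longrightarrow> (\<integral>y. f (x, y) \<partial>M2) \<le> c"
  shows "integral\<^sup>L (M1 \<Otimes>\<^sub>M M2) f \<le> c"
proof -
  interpret pair_prob_space M1 M2
    using M1 M2 by (simp add: pair_prob_space_def pair_sigma_finite_def prob_space_imp_sigma_finite)
  have f_int: "integrable (M1 \<Otimes>\<^sub>M M2) (\<lambda>(x, y). f (x, y))"
    using integrable_bounded_measurable[OF f] by simp
  have "integral\<^sup>L (M1 \<Otimes>\<^sub>M M2) f = (\<integral>x. (\<integral>y. f (x, y) \<partial>M2) \<partial>M1)"
    using integral_fst[OF f_int] by simp
  also have "\<dots> \<le> c"
    using integrable_fst[OF f_int] c by (intro M1.integral_le_const AE_I2) auto
  finally show ?thesis .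
qed

lemma integral_PiM_split_coordinate:
  fixes g :: "('i \<Rightarrow> 'b) \<Rightarrow> real"
  assumes I: "finite I" "i \<in> I" and M: "\<And>j. j \<in> I \<Longrightarrow> prob_space (M j)"
    and g: "integrable (PiM I M) g"
  shows "integral\<^sup>L (PiM I M) g = (\<integral>a. (\<integral>y. g (a(i := y)) \<partial>M i) \<partial>PiM (I - {i}) M)"
proof -
  \<comment> \<open>The factors outside I are irrelevant; replacing them makes the family sigma-finite.\<close>
  define M' where "M' j = (if j \<in> I then M j else count_space {undefined})" for j
  have PiM_M': "PiM I M' = PiM I M" "PiM (I - {i}) M' = PiM (I - {i}) M"
    by (auto simp: M'_def intro!: PiM_cong)
  interpret product_sigma_finite M'
  proof (rule product_sigma_finite.intro)
    fix j show "sigma_finite_measure (M' j)"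
      using M[of j] by (cases "j \<in> I")
        (auto simp: M'_def prob_space_imp_sigma_finite sigma_finite_measure_count_space_finite)
  qed
  have "insert i (I - {i}) = I" using I by auto
  then show ?thesis
    using product_integral_insert[of "I - {i}" i g] I g PiM_M' by (simp add: M'_def)
qed

lemma bounded_measurable_PiM_update:
  assumes "i \<in> I" and g: "bounded_measurable (PiM I M) g"
  shows "bounded_measurable (PiM (I - {i}) M \<Otimes>\<^sub>M M i) (\<lambda>(a, y). g (a(i := y)))"
proof -
  have I_eq: "insert i (I - {i}) = I" using assms(1) by auto
  obtain B where g_meas: "g \<in> borel_measurable (PiM I M)"
    and B: "\<And>a. a \<in> space (PiM I M) \<Longrightarrow> \<bar>g a\<bar> \<le> B"
    using g by (auto simp: bounded_measurable_def)
  have "(\<lambda>(a, y). g (a(i := y))) \<in> borel_measurable (PiM (I - {i}) M \<Otimes>\<^sub>M M i)"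
    using measurable_compose[OF measurable_add_dim[of i "I - {i}" M]] g_meas I_eq
    by (simp add: case_prod_beta')
  then show ?thesis
    using measurable_space[OF measurable_add_dim[of i "I - {i}" M]] I_eq B
    by (intro bounded_measurableI[where B=B]) auto
qed

lemma integral_PiM_le_of_integral_coordinate_le:
  fixes g :: "('i \<Rightarrow> 'b) \<Rightarrow> real"
  assumes I: "finite I" "i \<in> I" and M: "\<And>j. j \<in> I \<Longrightarrow> prob_space (M j)"
    and g: "bounded_measurable (PiM I M) g"
    and c: "\<And>a. a \<in> space (PiM I M) \<Longrightarrow> (\<integral>y. g (a(i := y)) \<partial>M i) \<le> c"
  shows "integral\<^sup>L (PiM I M) g \<le> c"
proof -
  interpret P: prob_space "PiM I M" by (rule prob_space_PiM) (rule M)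
  interpret Q: prob_space "PiM (I - {i}) M" by (rule prob_space_PiM) (rule M, auto)
  interpret Mi: prob_space "M i" using I M by auto
  have "integral\<^sup>L (PiM I M) g = (\<integral>a. (\<integral>y. g (a(i := y)) \<partial>M i) \<partial>PiM (I - {i}) M)"
    by (rule integral_PiM_split_coordinate[OF I M P.integrable_bounded_measurable[OF g]])
  also have "\<dots> \<le> c"
  proof (rule Q.integral_le_const)
    from bounded_measurable_integrate_snd[OF Mi.prob_space_axioms
        bounded_measurable_PiM_update[OF I(2) g]]
    show "integrable (PiM (I - {i}) M) (\<lambda>a. \<integral>y. g (a(i := y)) \<partial>M i)"
      by (intro Q.integrable_bounded_measurable) simp
    show "AE a in PiM (I - {i}) M. (\<integral>y. g (a(i := y)) \<partial>M i) \<le> c"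
    proof (rule AE_I2)
      fix a assume a: "a \<in> space (PiM (I - {i}) M)"
      obtain y where "y \<in> space (M i)" using Mi.not_empty by blast
      then have "a(i := y) \<in> space (PiM I M)"
        using measurable_space[OF measurable_add_dim[of i "I - {i}" M], of "(a, y)"] a I
        by (simp add: space_pair_measure insert_absorb)
      from c[OF this] show "(\<integral>y. g (a(i := y)) \<partial>M i) \<le> c" by simp
    qed
  qed
  finally show ?thesis .
qed

lemma borel_measurable_continuous_on_compose:
  fixes f :: "'a::topological_space \<Rightarrow> 'b::topological_space"
  assumes f: "continuous_on K f" and h: "h \<in> borel_measurable M"
    and hK: "\<And>x. x \<in> space M \<Longrightarrow> h x \<in> K"
  shows "(\<lambda>x. f (h x)) \<in> borel_measurable M"
  using hK measurable_compose[OF measurable_restrict_space2[OF _ h]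
      borel_measurable_continuous_on_restrict[OF f]]
  by auto

(* The hypotheses of theorem1 except the choice of N, of which only the consequence beta >= 0 is kept. *)
locale online_fw =
  fixes K :: "'a::euclidean_space set" and D \<beta> \<sigma> C :: real and T N :: nat
    and loss :: "nat \<Rightarrow> 'a \<Rightarrow> real" and grad :: "nat \<Rightarrow> 'a \<Rightarrow> 'a"
    and orc :: "nat \<Rightarrow> 'a \<Rightarrow> 'w \<Rightarrow> 'a" and W :: "'w measure"
    and A :: "nat \<Rightarrow> 'r \<Rightarrow> (nat \<Rightarrow> 'a) \<Rightarrow> nat \<Rightarrow> 'a" and R :: "nat \<Rightarrow> 'r measure"
    and xstar :: 'a
  assumes K_compact: "compact K" and K_convex: "convex K" and K_zero: "0 \<in> K"
    and diam: "\<forall>x\<in>K. \<forall>y\<in>K. norm (x - y) \<le> D"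
    and sigma_pos: "\<sigma> > 0" and beta_nonneg: "\<beta> \<ge> 0"
    and loss_convex: "\<forall>t<T. convex_on K (loss t)"
    and loss_grad: "\<forall>t<T. \<forall>x\<in>K. (loss t has_derivative (\<lambda>h. grad t x \<bullet> h)) (at x within K)"
    and smooth: "\<forall>t<T. \<forall>x\<in>K. \<forall>y\<in>K. norm (grad t x - grad t y) \<le> \<beta> * norm (x - y)"
    and W_prob: "prob_space W"
    and orc_meas: "\<forall>t<T. (\<lambda>(x, w). orc t x w) \<in> borel_measurable (borel \<Otimes>\<^sub>M W)"
    and orc_unbiased: "\<forall>t<T. \<forall>x\<in>K. integrable W (orc t x) \<and> (\<integral>w. orc t x w \<partial>W) = grad t x"
    and orc_bound: "\<forall>t<T. \<forall>x\<in>K. \<forall>w\<in>space W. (norm (orc t x w))\<^sup>2 \<le> \<sigma>\<^sup>2"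
    and R_prob: "\<forall>i<N. prob_space (R i)"
    and A_meas: "\<forall>i<N. \<forall>t. (\<lambda>(r, gs). A i r gs t)
                    \<in> borel_measurable (R i \<Otimes>\<^sub>M PiM UNIV (\<lambda>_::nat. (borel :: 'a measure)))"
    and A_in_K: "\<forall>i<N. \<forall>r\<in>space (R i). \<forall>gs t. A i r gs t \<in> K"
    and A_causal: "\<forall>i<N. \<forall>r gs gs' t. (\<forall>s<t. gs s = gs' s) \<longrightarrow> A i r gs t = A i r gs' t"
    and A_regret: "\<forall>i<N. \<forall>gs. (\<forall>t<T. norm (gs t) \<le> \<sigma>) \<longrightarrow>
                    (\<forall>x\<in>K. (\<integral>r. (\<Sum>t<T. gs t \<bullet> A i r gs t) \<partial>R i) - (\<Sum>t<T. gs t \<bullet> x)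
                              \<le> C * \<sigma> * D * sqrt (real T))"
    and xstar_K: "xstar \<in> K"
begin

abbreviation seeds where "seeds \<equiv> seed_space N T R W"

(* With OLO i here being A_(i+1) of the paper, iterate i omega t, feedback i omega t and
   olo_point i omega t are x_t^i, g_(t,i+1) and x_(t,i+1) of Algorithm 1 under the seeds omega. *)

definition iterate :: "nat \<Rightarrow> (nat \<Rightarrow> 'r) \<times> (nat \<times> nat \<Rightarrow> 'w) \<Rightarrow> nat \<Rightarrow> 'a" where
  "iterate i \<omega> t = fw_iter i A orc (fst \<omega>) (snd \<omega>) t"

definition feedback :: "nat \<Rightarrow> (nat \<Rightarrow> 'r) \<times> (nat \<times> nat \<Rightarrow> 'w) \<Rightarrow> nat \<Rightarrow> 'a" where
  "feedback i \<omega> s = orc s (iterate i \<omega> s) (snd \<omega> (s, i))"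

definition olo_point :: "nat \<Rightarrow> (nat \<Rightarrow> 'r) \<times> (nat \<times> nat \<Rightarrow> 'w) \<Rightarrow> nat \<Rightarrow> 'a" where
  "olo_point i \<omega> t = A i (fst \<omega> i) (feedback i \<omega>) t"

definition excess :: "nat \<Rightarrow> (nat \<Rightarrow> 'r) \<times> (nat \<times> nat \<Rightarrow> 'w) \<Rightarrow> real" where
  "excess i \<omega> = (\<Sum>t<T. loss t (iterate i \<omega> t) - loss t xstar)"

definition fw_gap :: "nat \<Rightarrow> (nat \<Rightarrow> 'r) \<times> (nat \<times> nat \<Rightarrow> 'w) \<Rightarrow> real" where
  "fw_gap i \<omega> = (\<Sum>t<T. grad t (iterate i \<omega> t) \<bullet> (olo_point i \<omega> t - xstar))"

lemma iterate_0 [simp]: "iterate 0 \<omega> t = 0"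
  by (simp add: iterate_def)

lemma iterate_Suc:
  "iterate (Suc i) \<omega> t
     = (1 - 2 / (real i + 2)) *\<^sub>R iterate i \<omega> t + (2 / (real i + 2)) *\<^sub>R olo_point i \<omega> t"
  by (simp add: iterate_def olo_point_def feedback_def[abs_def])

lemma prob_space_seeds: "prob_space seeds"
  unfolding seed_space_def
  by (intro prob_space_pair prob_space_PiM) (use R_prob W_prob in auto)

lemma space_seeds: "(a, b) \<in> space seeds \<longleftrightarrow>
    a \<in> space (PiM {..<N} R) \<and> b \<in> space (PiM ({..<T} \<times> {..<N}) (\<lambda>_. W))"
  by (simp add: seed_space_def space_pair_measure)

lemma olo_seed_in_space: "\<omega> \<in> space seeds \<Longrightarrow> i < N \<Longrightarrow> fst \<omega> i \<in> space (R i)"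
  by (auto simp: seed_space_def space_pair_measure space_PiM)

lemma oracle_seed_in_space: "\<omega> \<in> space seeds \<Longrightarrow> s < T \<Longrightarrow> i < N \<Longrightarrow> snd \<omega> (s, i) \<in> space W"
  by (auto simp: seed_space_def space_pair_measure space_PiM)

lemma norm_le_diam: "x \<in> K \<Longrightarrow> norm x \<le> D"
  using diam K_zero by force

lemma olo_point_in_K: "\<omega> \<in> space seeds \<Longrightarrow> i < N \<Longrightarrow> olo_point i \<omega> t \<in> K"
  unfolding olo_point_def using A_in_K olo_seed_in_space by blast

lemma iterate_in_K: "\<omega> \<in> space seeds \<Longrightarrow> i \<le> N \<Longrightarrow> iterate i \<omega> t \<in> K"
proof (induction i)
  case 0
  then show ?case by (simp add: K_zero)
next
  case (Suc i)
  then have "iterate i \<omega> t \<in> K" "olo_point i \<omega> t \<in> K"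
    by (auto simp: olo_point_in_K)
  then show ?case
    using convexD[OF K_convex, of "iterate i \<omega> t" "olo_point i \<omega> t" "1 - 2 / (real i + 2)"]
    by (simp add: iterate_Suc)
qed

lemma norm_feedback_le:
  assumes "\<omega> \<in> space seeds" "i < N" "s < T"
  shows "norm (feedback i \<omega> s) \<le> \<sigma>"
proof (rule power2_le_imp_le)
  show "(norm (feedback i \<omega> s))\<^sup>2 \<le> \<sigma>\<^sup>2"
    unfolding feedback_def using assms
    by (intro orc_bound[rule_format] iterate_in_K oracle_seed_in_space) auto
qed (use sigma_pos in simp)

lemma fw_iter_cong:
  assumes "i \<le> N" "\<forall>j<i. rs j = rs' j" "\<forall>j<i. \<forall>s<t. ws (s, j) = ws' (s, j)"
  shows "fw_iter i A orc rs ws t = fw_iter i A orc rs' ws' t"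
  using assms
proof (induction i arbitrary: t)
  case 0
  then show ?case by simp
next
  case (Suc i)
  have IH: "fw_iter i A orc rs ws s = fw_iter i A orc rs' ws' s" if "s \<le> t" for s
    using Suc.IH[of s] Suc.prems that by auto
  have "A i (rs i) (\<lambda>s. orc s (fw_iter i A orc rs ws s) (ws (s, i))) t
      = A i (rs i) (\<lambda>s. orc s (fw_iter i A orc rs' ws' s) (ws' (s, i))) t"
    using Suc.prems IH by (intro A_causal[rule_format]) auto
  also have "\<dots> = A i (rs' i) (\<lambda>s. orc s (fw_iter i A orc rs' ws' s) (ws' (s, i))) t"
    using Suc.prems by simp
  finally show ?case using IH[of t] by simp
qed

lemma iterate_upd_olo_seed: "i \<le> N \<Longrightarrow> i \<le> j \<Longrightarrow> iterate i (a(j := r), b) t = iterate i (a, b) t"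
  unfolding iterate_def by (rule fw_iter_cong) auto

lemma iterate_upd_oracle_seed: "i \<le> N \<Longrightarrow> i \<le> j \<Longrightarrow> iterate i (a, b((s, j) := w)) t = iterate i (a, b) t"
  unfolding iterate_def by (rule fw_iter_cong) auto

lemma feedback_upd_olo_seed: "i \<le> N \<Longrightarrow> feedback i (a(i := r), b) = feedback i (a, b)"
  by (simp add: fun_eq_iff feedback_def iterate_upd_olo_seed)

lemma olo_point_upd_olo_seed: "i \<le> N \<Longrightarrow> olo_point i (a(i := r), b) t = A i r (feedback i (a, b)) t"
  by (simp add: olo_point_def feedback_upd_olo_seed)

lemma feedback_upd_oracle_seed:
  "i \<le> N \<Longrightarrow> feedback i (a, b((t, i) := w)) t = orc t (iterate i (a, b) t) w"
  by (simp add: feedback_def iterate_upd_oracle_seed)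

lemma olo_point_upd_oracle_seed:
  assumes "i < N"
  shows "olo_point i (a, b((t, i) := w)) t = olo_point i (a, b) t"
  unfolding olo_point_def fst_conv
  using assms by (intro A_causal[rule_format]) (auto simp: feedback_def iterate_upd_oracle_seed)

lemma measurable_olo_seed: "i < N \<Longrightarrow> (\<lambda>\<omega>. fst \<omega> i) \<in> measurable seeds (R i)"
  unfolding seed_space_def
  by (rule measurable_compose[OF measurable_fst measurable_component_singleton]) simp

lemma measurable_oracle_seed: "s < T \<Longrightarrow> i < N \<Longrightarrow> (\<lambda>\<omega>. snd \<omega> (s, i)) \<in> measurable seeds W"
  unfolding seed_space_def
  by (rule measurable_compose[OF measurable_snd measurable_component_singleton]) simp

lemma feedback_measurable:
  assumes i: "i < N" and s: "s < T" and X: "(\<lambda>\<omega>. iterate i \<omega> s) \<in> borel_measurable seeds"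
  shows "(\<lambda>\<omega>. feedback i \<omega> s) \<in> borel_measurable seeds"
proof -
  have "(\<lambda>\<omega>. (iterate i \<omega> s, snd \<omega> (s, i))) \<in> measurable seeds (borel \<Otimes>\<^sub>M W)"
    by (rule measurable_Pair[OF X measurable_oracle_seed[OF s i]])
  moreover have "(\<lambda>(x, w). orc s x w) \<in> borel_measurable (borel \<Otimes>\<^sub>M W)"
    using orc_meas s by blast
  ultimately show ?thesis
    using measurable_compose by (fastforce simp: feedback_def)
qed

lemma olo_point_measurable:
  assumes i: "i < N" and t: "t < T"
    and X: "\<And>s. s < T \<Longrightarrow> (\<lambda>\<omega>. iterate i \<omega> s) \<in> borel_measurable seeds"
  shows "(\<lambda>\<omega>. olo_point i \<omega> t) \<in> borel_measurable seeds"
proof -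
  \<comment> \<open>By causality, only the finitely many measurable feedback vectors before round t matter.\<close>
  define past where "past \<omega> s = (if s < t then feedback i \<omega> s else 0)" for \<omega> s
  have "olo_point i \<omega> t = A i (fst \<omega> i) (past \<omega>) t" for \<omega>
    unfolding olo_point_def by (rule A_causal[rule_format, OF i]) (simp add: past_def)
  moreover have "past \<in> measurable seeds (PiM UNIV (\<lambda>_::nat. (borel :: 'a measure)))"
    unfolding past_def
  proof (rule measurable_PiM_single')
    fix s :: nat
    show "(\<lambda>\<omega>. if s < t then feedback i \<omega> s else 0) \<in> borel_measurable seeds"
      using feedback_measurable[OF i _ X, of s] t by (cases "s < t") auto
  qed (simp add: space_PiM)
  ultimately show ?thesis
    using measurable_compose[OF measurable_Pair[OF measurable_olo_seed[OF i]] A_meas[rule_format, OF i]]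
    by simp
qed

lemma iterate_measurable: "i \<le> N \<Longrightarrow> t < T \<Longrightarrow> (\<lambda>\<omega>. iterate i \<omega> t) \<in> borel_measurable seeds"
proof (induction i arbitrary: t)
  case (Suc i)
  then have "(\<lambda>\<omega>. iterate i \<omega> t) \<in> borel_measurable seeds"
    and "(\<lambda>\<omega>. olo_point i \<omega> t) \<in> borel_measurable seeds"
    by (auto intro: olo_point_measurable)
  then show ?case
    unfolding iterate_Suc by (intro borel_measurable_add borel_measurable_scaleR borel_measurable_const)
qed simp

lemma continuous_on_loss: "t < T \<Longrightarrow> continuous_on K (loss t)"
  using loss_grad by (intro has_derivative_continuous_on) blast

lemma continuous_on_grad: "t < T \<Longrightarrow> continuous_on K (grad t)"
  using smooth beta_nonneg
  by (intro lipschitz_on_continuous_on[of \<beta>] lipschitz_onI) (auto simp: dist_norm)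

lemma bounded_on_K:
  fixes f :: "'a \<Rightarrow> 'b::real_normed_vector"
  assumes "continuous_on K f"
  obtains B where "\<And>x. x \<in> K \<Longrightarrow> norm (f x) \<le> B"
  using compact_imp_bounded[OF compact_continuous_image[OF assms K_compact]]
  by (auto simp: bounded_iff)

lemma bounded_measurable_excess: "i \<le> N \<Longrightarrow> bounded_measurable seeds (excess i)"
  unfolding excess_def[abs_def]
proof (rule bounded_measurable_sum)
  fix t assume i: "i \<le> N" and "t \<in> {..<T}"
  then have t: "t < T" by simp
  obtain B where B: "\<And>x. x \<in> K \<Longrightarrow> norm (loss t x) \<le> B"
    using bounded_on_K[OF continuous_on_loss[OF t]] by blast
  show "bounded_measurable seeds (\<lambda>\<omega>. loss t (iterate i \<omega> t) - loss t xstar)"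
  proof (rule bounded_measurableI[where B="B + B"])
    show "(\<lambda>\<omega>. loss t (iterate i \<omega> t) - loss t xstar) \<in> borel_measurable seeds"
      by (intro borel_measurable_diff borel_measurable_const borel_measurable_continuous_on_compose[OF
            continuous_on_loss[OF t] iterate_measurable[OF i t]] iterate_in_K[OF _ i])
    fix \<omega> assume "\<omega> \<in> space seeds"
    then show "\<bar>loss t (iterate i \<omega> t) - loss t xstar\<bar> \<le> B + B"
      using B[of "iterate i \<omega> t"] B[OF xstar_K] iterate_in_K[OF _ i] by fastforce
  qed
qed

lemma bounded_measurable_inner_olo_point:
  assumes i: "i < N" and t: "t < T" and u: "u \<in> borel_measurable seeds"
    and B: "\<And>\<omega>. \<omega> \<in> space seeds \<Longrightarrow> norm (u \<omega>) \<le> B"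
  shows "bounded_measurable seeds (\<lambda>\<omega>. u \<omega> \<bullet> (olo_point i \<omega> t - xstar))"
proof (rule bounded_measurableI[where B="B * (D + D)"])
  show "(\<lambda>\<omega>. u \<omega> \<bullet> (olo_point i \<omega> t - xstar)) \<in> borel_measurable seeds"
    using i by (intro borel_measurable_inner borel_measurable_diff borel_measurable_const u
        olo_point_measurable[OF i t] iterate_measurable) auto
  fix \<omega> assume \<omega>: "\<omega> \<in> space seeds"
  have "\<bar>u \<omega> \<bullet> (olo_point i \<omega> t - xstar)\<bar> \<le> norm (u \<omega>) * norm (olo_point i \<omega> t - xstar)"
    by (rule Cauchy_Schwarz_ineq2)
  also have "\<dots> \<le> B * (D + D)"
  proof (rule mult_mono)
    show "norm (olo_point i \<omega> t - xstar) \<le> D + D"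
      using norm_triangle_ineq4[of "olo_point i \<omega> t" xstar]
        norm_le_diam[OF olo_point_in_K[OF \<omega> i, of t]] norm_le_diam[OF xstar_K] by linarith
    show "0 \<le> B" using B[OF \<omega>] norm_ge_zero[of "u \<omega>"] by linarith
  qed (use B[OF \<omega>] in auto)
  finally show "\<bar>u \<omega> \<bullet> (olo_point i \<omega> t - xstar)\<bar> \<le> B * (D + D)" .
qed

lemma bounded_measurable_feedback_term:
  "i < N \<Longrightarrow> t < T \<Longrightarrow> bounded_measurable seeds (\<lambda>\<omega>. feedback i \<omega> t \<bullet> (olo_point i \<omega> t - xstar))"
  by (intro bounded_measurable_inner_olo_point[where B=\<sigma>] feedback_measurable iterate_measurable
      norm_feedback_le) auto

lemma bounded_measurable_noise_term:
  assumes i: "i < N" and t: "t < T"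
  shows "bounded_measurable seeds
           (\<lambda>\<omega>. (grad t (iterate i \<omega> t) - feedback i \<omega> t) \<bullet> (olo_point i \<omega> t - xstar))"
proof -
  obtain B where B: "\<And>x. x \<in> K \<Longrightarrow> norm (grad t x) \<le> B"
    using bounded_on_K[OF continuous_on_grad[OF t]] by blast
  have "(\<lambda>\<omega>. grad t (iterate i \<omega> t)) \<in> borel_measurable seeds"
    using i by (intro borel_measurable_continuous_on_compose[OF continuous_on_grad[OF t]]
        iterate_measurable[OF _ t] iterate_in_K) auto
  moreover have "norm (grad t (iterate i \<omega> t) - feedback i \<omega> t) \<le> B + \<sigma>"
    if \<omega>: "\<omega> \<in> space seeds" for \<omega>
  proof -
    have "norm (grad t (iterate i \<omega> t)) \<le> B"
      using B iterate_in_K[OF \<omega>] i by simp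
    then show ?thesis
      using norm_triangle_ineq4[of "grad t (iterate i \<omega> t)" "feedback i \<omega> t"]
        norm_feedback_le[OF \<omega> i t] by linarith
  qed
  ultimately show ?thesis
    using i t by (intro bounded_measurable_inner_olo_point borel_measurable_diff
        feedback_measurable iterate_measurable) auto
qed

lemma expected_olo_regret_le:
  assumes i: "i < N" and gs: "\<forall>t<T. norm (gs t) \<le> \<sigma>" and x: "x \<in> K"
  shows "(\<integral>r. (\<Sum>t<T. gs t \<bullet> (A i r gs t - x)) \<partial>R i) \<le> C * \<sigma> * D * sqrt (real T)"
proof -
  interpret prob_space "R i" using R_prob i by simp
  have "bounded_measurable (R i) (\<lambda>r. gs t \<bullet> A i r gs t)" if t: "t < T" for t
  proof (rule bounded_measurableI[where B="\<sigma> * D"])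
    have "gs \<in> space (PiM UNIV (\<lambda>_::nat. (borel :: 'a measure)))"
      by (simp add: space_PiM)
    from measurable_compose[OF measurable_Pair2'[OF this] A_meas[rule_format, OF i]]
    show "(\<lambda>r. gs t \<bullet> A i r gs t) \<in> borel_measurable (R i)"
      by (intro borel_measurable_inner borel_measurable_const) simp
    fix r assume "r \<in> space (R i)"
    then have "norm (A i r gs t) \<le> D"
      using A_in_K i norm_le_diam by blast
    then have "norm (gs t) * norm (A i r gs t) \<le> \<sigma> * D"
      using gs t sigma_pos by (intro mult_mono) auto
    then show "\<bar>gs t \<bullet> A i r gs t\<bar> \<le> \<sigma> * D"
      using Cauchy_Schwarz_ineq2[of "gs t" "A i r gs t"] by linarith
  qed
  then have "integrable (R i) (\<lambda>r. \<Sum>t<T. gs t \<bullet> A i r gs t)"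
    by (intro integrable_bounded_measurable bounded_measurable_sum) auto
  then have "(\<integral>r. (\<Sum>t<T. gs t \<bullet> (A i r gs t - x)) \<partial>R i)
      = (\<integral>r. (\<Sum>t<T. gs t \<bullet> A i r gs t) \<partial>R i) - (\<Sum>t<T. gs t \<bullet> x)"
    by (simp add: inner_diff_right sum_subtractf prob_space)
  also have "\<dots> \<le> C * \<sigma> * D * sqrt (real T)"
    using A_regret i gs x by blast
  finally show ?thesis .
qed

lemma expected_feedback_regret_le:
  assumes i: "i < N"
  shows "(\<integral>\<omega>. (\<Sum>t<T. feedback i \<omega> t \<bullet> (olo_point i \<omega> t - xstar)) \<partial>seeds)
           \<le> C * \<sigma> * D * sqrt (real T)"
proof -
  let ?f = "\<lambda>\<omega>. \<Sum>t<T. feedback i \<omega> t \<bullet> (olo_point i \<omega> t - xstar)"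
  have f: "bounded_measurable seeds ?f"
    using i by (intro bounded_measurable_sum bounded_measurable_feedback_term) auto
  \<comment> \<open>The feedback to OLO i does not depend on its own seed, so that seed is integrated innermost.\<close>
  show ?thesis
    unfolding seed_space_def
  proof (rule integral_pair_le_of_integral_fst_le)
    show "prob_space (PiM {..<N} R)" "prob_space (PiM ({..<T} \<times> {..<N}) (\<lambda>_. W))"
      using R_prob W_prob by (auto intro: prob_space_PiM)
    show f': "bounded_measurable (PiM {..<N} R \<Otimes>\<^sub>M PiM ({..<T} \<times> {..<N}) (\<lambda>_. W)) ?f"
      using f by (simp add: seed_space_def)
    fix b assume b: "b \<in> space (PiM ({..<T} \<times> {..<N}) (\<lambda>_. W))"
    show "(\<integral>a. ?f (a, b) \<partial>PiM {..<N} R) \<le> C * \<sigma> * D * sqrt (real T)"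
    proof (rule integral_PiM_le_of_integral_coordinate_le)
      show "finite {..<N}" "i \<in> {..<N}" "\<And>j. j \<in> {..<N} \<Longrightarrow> prob_space (R j)"
        using i R_prob by auto
      show "bounded_measurable (PiM {..<N} R) (\<lambda>a. ?f (a, b))"
        by (rule bounded_measurable_pair_section1[OF f' b])
      fix a assume a: "a \<in> space (PiM {..<N} R)"
      define gs where "gs = feedback i (a, b)"
      have "?f (a(i := r), b) = (\<Sum>t<T. gs t \<bullet> (A i r gs t - xstar))" for r
        using i by (simp add: gs_def feedback_upd_olo_seed olo_point_upd_olo_seed)
      moreover have "\<forall>t<T. norm (gs t) \<le> \<sigma>"
        using norm_feedback_le a b i by (simp add: gs_def space_seeds)
      ultimately show "(\<integral>r. ?f (a(i := r), b) \<partial>R i) \<le> C * \<sigma> * D * sqrt (real T)"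
        using expected_olo_regret_le[OF i _ xstar_K] by simp
    qed
  qed
qed

lemma expected_oracle_noise_le_zero:
  assumes i: "i < N" and t: "t < T"
  shows "(\<integral>\<omega>. (grad t (iterate i \<omega> t) - feedback i \<omega> t) \<bullet> (olo_point i \<omega> t - xstar) \<partial>seeds) \<le> 0"
proof -
  let ?f = "\<lambda>\<omega>. (grad t (iterate i \<omega> t) - feedback i \<omega> t) \<bullet> (olo_point i \<omega> t - xstar)"
  \<comment> \<open>The point olo_point i is chosen before the oracle seed (t, i) is drawn, so that seed is
    integrated innermost, where the oracle is unbiased.\<close>
  show ?thesis
    unfolding seed_space_def
  proof (rule integral_pair_le_of_integral_snd_le)
    show "prob_space (PiM {..<N} R)" "prob_space (PiM ({..<T} \<times> {..<N}) (\<lambda>_. W))"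
      using R_prob W_prob by (auto intro: prob_space_PiM)
    show f: "bounded_measurable (PiM {..<N} R \<Otimes>\<^sub>M PiM ({..<T} \<times> {..<N}) (\<lambda>_. W)) ?f"
      using bounded_measurable_noise_term[OF i t] by (simp add: seed_space_def)
    fix a assume a: "a \<in> space (PiM {..<N} R)"
    show "(\<integral>b. ?f (a, b) \<partial>PiM ({..<T} \<times> {..<N}) (\<lambda>_. W)) \<le> 0"
    proof (rule integral_PiM_le_of_integral_coordinate_le)
      show "finite ({..<T} \<times> {..<N})" "(t, i) \<in> {..<T} \<times> {..<N}"
        "\<And>j. j \<in> {..<T} \<times> {..<N} \<Longrightarrow> prob_space W"
        using i t W_prob by auto
      show "bounded_measurable (PiM ({..<T} \<times> {..<N}) (\<lambda>_. W)) (\<lambda>b. ?f (a, b))"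
        by (rule bounded_measurable_pair_section2[OF f a])
      fix b assume b: "b \<in> space (PiM ({..<T} \<times> {..<N}) (\<lambda>_. W))"
      interpret W: prob_space W by (rule W_prob)
      define y where "y = iterate i (a, b) t"
      have "y \<in> K"
        using iterate_in_K a b i by (simp add: y_def space_seeds)
      then have "integrable W (orc t y)" "(\<integral>w. orc t y w \<partial>W) = grad t y"
        using orc_unbiased t by blast+
      then show "(\<integral>w. ?f (a, b((t, i) := w)) \<partial>W) \<le> 0"
        using i by (simp add: iterate_upd_oracle_seed feedback_upd_oracle_seed
            olo_point_upd_oracle_seed y_def inner_diff_left W.prob_space)
    qed
  qed
qed

lemma expected_fw_gap_le:
  assumes i: "i < N"
  shows "integral\<^sup>L seeds (fw_gap i) \<le> C * \<sigma> * D * sqrt (real T)"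
    and "integrable seeds (fw_gap i)"
proof -
  interpret prob_space seeds by (rule prob_space_seeds)
  let ?regret = "\<lambda>\<omega>. \<Sum>t<T. feedback i \<omega> t \<bullet> (olo_point i \<omega> t - xstar)"
  let ?noise = "\<lambda>t \<omega>. (grad t (iterate i \<omega> t) - feedback i \<omega> t) \<bullet> (olo_point i \<omega> t - xstar)"
  have gap_eq: "fw_gap i = (\<lambda>\<omega>. ?regret \<omega> + (\<Sum>t<T. ?noise t \<omega>))"
    by (simp add: fun_eq_iff fw_gap_def inner_diff_left sum.distrib[symmetric])
  have regret_int: "integrable seeds ?regret"
    using i by (intro integrable_bounded_measurable bounded_measurable_sum
        bounded_measurable_feedback_term) auto
  have noise_int: "integrable seeds (?noise t)" if "t < T" for t
    using i that by (intro integrable_bounded_measurable bounded_measurable_noise_term)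
  show "integrable seeds (fw_gap i)"
    unfolding gap_eq
    by (rule Bochner_Integration.integrable_add[OF regret_int Bochner_Integration.integrable_sum])
      (simp add: noise_int)
  have noise_sum: "(\<integral>\<omega>. (\<Sum>t<T. ?noise t \<omega>) \<partial>seeds) = (\<Sum>t<T. integral\<^sup>L seeds (?noise t))"
    by (rule Bochner_Integration.integral_sum) (simp add: noise_int)
  have "integral\<^sup>L seeds (fw_gap i) = integral\<^sup>L seeds ?regret + (\<Sum>t<T. integral\<^sup>L seeds (?noise t))"
    unfolding gap_eq noise_sum[symmetric]
    by (rule Bochner_Integration.integral_add[OF regret_int Bochner_Integration.integrable_sum])
      (simp add: noise_int)
  also have "\<dots> \<le> C * \<sigma> * D * sqrt (real T) + (\<Sum>t<T. 0)"
    using expected_feedback_regret_le[OF i] expected_oracle_noise_le_zero[OF i]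
    by (intro add_mono sum_mono) auto
  finally show "integral\<^sup>L seeds (fw_gap i) \<le> C * \<sigma> * D * sqrt (real T)" by simp
qed

lemma excess_Suc_le:
  assumes \<omega>: "\<omega> \<in> space seeds" and i: "i < N"
  shows "excess (Suc i) \<omega> \<le> (1 - 2 / (real i + 2)) * excess i \<omega> + 2 / (real i + 2) * fw_gap i \<omega>
           + \<beta> * D\<^sup>2 * real T / 2 * (2 / (real i + 2))\<^sup>2"
proof -
  let ?e = "2 / (real i + 2)"
  have "loss t (iterate (Suc i) \<omega> t) - loss t xstar
        \<le> (1 - ?e) * (loss t (iterate i \<omega> t) - loss t xstar)
          + ?e * (grad t (iterate i \<omega> t) \<bullet> (olo_point i \<omega> t - xstar)) + \<beta> / 2 * ?e\<^sup>2 * D\<^sup>2"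
    if t: "t < T" for t
  proof -
    have y: "iterate i \<omega> t \<in> K" and v: "olo_point i \<omega> t \<in> K"
      using iterate_in_K[OF \<omega>] olo_point_in_K[OF \<omega>] i by auto
    have "(norm (olo_point i \<omega> t - iterate i \<omega> t))\<^sup>2 \<le> D\<^sup>2"
      using diam y v by (intro power_mono) auto
    then have "\<beta> / 2 * ?e\<^sup>2 * (norm (olo_point i \<omega> t - iterate i \<omega> t))\<^sup>2 \<le> \<beta> / 2 * ?e\<^sup>2 * D\<^sup>2"
      using beta_nonneg by (intro mult_left_mono) auto
    with frank_wolfe_step_le[of K "loss t" "grad t" \<beta> ?e, OF _ _ _ _ _ y v xstar_K]
    show ?thesis
      using loss_convex loss_grad smooth t by (simp add: iterate_Suc)
  qed
  then have "excess (Suc i) \<omega> \<le> (\<Sum>t<T. (1 - ?e) * (loss t (iterate i \<omega> t) - loss t xstar)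
          + ?e * (grad t (iterate i \<omega> t) \<bullet> (olo_point i \<omega> t - xstar)) + \<beta> / 2 * ?e\<^sup>2 * D\<^sup>2)"
    unfolding excess_def by (intro sum_mono) auto
  also have "\<dots> = (1 - ?e) * excess i \<omega> + ?e * fw_gap i \<omega> + \<beta> * D\<^sup>2 * real T / 2 * ?e\<^sup>2"
    by (simp add: excess_def fw_gap_def sum.distrib sum_distrib_left)
  finally show ?thesis .
qed

lemma expected_excess_Suc_le:
  assumes i: "i < N"
  shows "integral\<^sup>L seeds (excess (Suc i))
           \<le> (1 - 2 / (real i + 2)) * integral\<^sup>L seeds (excess i)
             + 2 / (real i + 2) * (C * \<sigma> * D * sqrt (real T))
             + \<beta> * D\<^sup>2 * real T / 2 * (2 / (real i + 2))\<^sup>2"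
proof -
  interpret prob_space seeds by (rule prob_space_seeds)
  let ?e = "2 / (real i + 2)"
  have excess_int: "integrable seeds (excess j)" if "j \<le> N" for j
    using that by (intro integrable_bounded_measurable bounded_measurable_excess)
  have "integral\<^sup>L seeds (excess (Suc i))
      \<le> (\<integral>\<omega>. (1 - ?e) * excess i \<omega> + ?e * fw_gap i \<omega> + \<beta> * D\<^sup>2 * real T / 2 * ?e\<^sup>2 \<partial>seeds)"
    using i excess_int expected_fw_gap_le(2)[OF i] excess_Suc_le
    by (intro integral_mono) auto
  also have "\<dots> = (1 - ?e) * integral\<^sup>L seeds (excess i) + ?e * integral\<^sup>L seeds (fw_gap i)
                   + \<beta> * D\<^sup>2 * real T / 2 * ?e\<^sup>2"
    using i excess_int expected_fw_gap_le(2)[OF i] by (simp add: prob_space)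
  also have "\<dots> \<le> (1 - ?e) * integral\<^sup>L seeds (excess i) + ?e * (C * \<sigma> * D * sqrt (real T))
                   + \<beta> * D\<^sup>2 * real T / 2 * ?e\<^sup>2"
    using expected_fw_gap_le(1)[OF i] by (intro add_mono mult_left_mono order_refl) auto
  finally show ?thesis .
qed

lemma expected_excess_le:
  assumes "N \<ge> 1"
  shows "integral\<^sup>L seeds (excess N)
           \<le> C * \<sigma> * D * sqrt (real T) + 2 * (\<beta> * D\<^sup>2 * real T) / (real N + 1)"
proof -
  obtain n where N: "N = Suc n" using assms by (cases N) auto
  have "integral\<^sup>L seeds (excess (Suc n))
          \<le> C * \<sigma> * D * sqrt (real T) + 2 * (\<beta> * D\<^sup>2 * real T) / (real n + 2)"
    using beta_nonneg N by (intro frank_wolfe_recursion_bound expected_excess_Suc_le) auto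
  then show ?thesis by (simp add: N add.commute add.left_commute)
qed

end

theorem theorem1:
  fixes K :: "'a::euclidean_space set" and D \<beta> \<sigma> C :: real and T N :: nat
    and loss :: "nat \<Rightarrow> 'a \<Rightarrow> real" and grad :: "nat \<Rightarrow> 'a \<Rightarrow> 'a"
    and orc :: "nat \<Rightarrow> 'a \<Rightarrow> 'w \<Rightarrow> 'a" and W :: "'w measure"
    and A :: "nat \<Rightarrow> 'r \<Rightarrow> (nat \<Rightarrow> 'a) \<Rightarrow> nat \<Rightarrow> 'a" and R :: "nat \<Rightarrow> 'r measure"
    and xstar :: 'a
  assumes K_compact: "compact K" and K_convex: "convex K" and K_zero: "0 \<in> K"
    and diam: "\<forall>x\<in>K. \<forall>y\<in>K. norm (x - y) \<le> D"
    and sigma_pos: "\<sigma> > 0"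
    and N_pos: "N \<ge> 1" and N_def: "real N = \<beta> * D * sqrt (real T) / \<sigma>"
    and loss_convex: "\<forall>t<T. convex_on K (loss t)"
    and loss_grad: "\<forall>t<T. \<forall>x\<in>K. (loss t has_derivative (\<lambda>h. grad t x \<bullet> h)) (at x within K)"
    and smooth: "\<forall>t<T. \<forall>x\<in>K. \<forall>y\<in>K. norm (grad t x - grad t y) \<le> \<beta> * norm (x - y)"
    and W_prob: "prob_space W"
    and orc_meas: "\<forall>t<T. (\<lambda>(x, w). orc t x w) \<in> borel_measurable (borel \<Otimes>\<^sub>M W)"
    and orc_unbiased: "\<forall>t<T. \<forall>x\<in>K. integrable W (orc t x) \<and> (\<integral>w. orc t x w \<partial>W) = grad t x"
    and orc_bound: "\<forall>t<T. \<forall>x\<in>K. \<forall>w\<in>space W. (norm (orc t x w))\<^sup>2 \<le> \<sigma>\<^sup>2"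
    and R_prob: "\<forall>i<N. prob_space (R i)"
    and A_meas: "\<forall>i<N. \<forall>t. (\<lambda>(r, gs). A i r gs t)
                    \<in> borel_measurable (R i \<Otimes>\<^sub>M PiM UNIV (\<lambda>_::nat. (borel :: 'a measure)))"
    and A_in_K: "\<forall>i<N. \<forall>r\<in>space (R i). \<forall>gs t. A i r gs t \<in> K"
    and A_causal: "\<forall>i<N. \<forall>r gs gs' t. (\<forall>s<t. gs s = gs' s) \<longrightarrow> A i r gs t = A i r gs' t"
    and A_regret: "\<forall>i<N. \<forall>gs. (\<forall>t<T. norm (gs t) \<le> \<sigma>) \<longrightarrow>
                    (\<forall>x\<in>K. (\<integral>r. (\<Sum>t<T. gs t \<bullet> A i r gs t) \<partial>R i) - (\<Sum>t<T. gs t \<bullet> x)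
                              \<le> C * \<sigma> * D * sqrt (real T))"
    and xstar_K: "xstar \<in> K"
  shows "(\<integral>\<omega>. (\<Sum>t<T. loss t (fw_iter N A orc (fst \<omega>) (snd \<omega>) t) - loss t xstar)
            \<partial>seed_space N T R W) \<le> (C + 2) * \<sigma> * D * sqrt (real T)"
proof -
  have D: "D \<ge> 0" using diam K_zero by force
  interpret online_fw K D \<beta> \<sigma> C T N loss grad orc W A R xstar
    using smoothness_nonneg_of_step_count[OF sigma_pos D N_pos N_def]
    by (intro online_fw.intro) (use assms in blast)+
  have excess_N: "excess N = (\<lambda>\<omega>. \<Sum>t<T. loss t (fw_iter N A orc (fst \<omega>) (snd \<omega>) t) - loss t xstar)"
    by (simp add: fun_eq_iff excess_def iterate_def)
  have "integral\<^sup>L seeds (excess N)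
      \<le> C * \<sigma> * D * sqrt (real T) + 2 * (\<beta> * D\<^sup>2 * real T / (real N + 1))"
    using expected_excess_le[OF N_pos] by simp
  also have "\<dots> \<le> C * \<sigma> * D * sqrt (real T) + 2 * (\<sigma> * D * sqrt (real T))"
    using smoothness_term_le_of_step_count[OF sigma_pos D N_def] by simp
  also have "\<dots> = (C + 2) * \<sigma> * D * sqrt (real T)"
    by (simp add: algebra_simps)
  finally show ?thesis
    unfolding excess_N .
qed

end
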